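(* Let $m\ge 1$, let $\mathbb{U},\mathbb{V},\mathbb{W}$ be finite-dimensional inner product spaces, and let $$\mathcal{P}=\sum_{|\alpha|\le m} A_\alpha(x)D^\alpha:\mathcal{D}'(\mathbb{R}^n,\mathbb{U})\to\mathcal{D}'(\mathbb{R}^n,\mathbb{V}),\qquad \mathcal{Q}=\sum_{|\beta|\le m} B_\beta(x)D^\beta:\mathcal{D}'(\mathbb{R}^n,\mathbb{V})\to\mathcal{D}'(\mathbb{R}^n,\mathbb{W})$$ be differential operators of order $m$ whose coefficients $A_\alpha:\mathbb{R}^n\to\mathrm{Hom}(\mathbb{U},\mathbb{V})$ and $B_\beta:\mathbb{R}^n\to\mathrm{Hom}(\mathbb{V},\mathbb{W})$ are continuous. Write $\mathcal{P}_m(x,\xi)=\sum_{|\alpha|=m}A_\alpha(x)\xi^\alpha$ and $\mathcal{Q}_m(x,\xi)=\sum_{|\beta|=m}B_\beta(x)\xi^\beta$ for the principal symbols. Then the sequence $\mathcal{D}'(\mathbb{R}^n,\mathbb{U})\xrightarrow{\mathcal{P}}\mathcal{D}'(\mathbb{R}^n,\mathbb{V})\xrightarrow{\mathcal{Q}}\mathcal{D}'(\mathbb{R}^n,\mathbb{W})$ is an elliptic complex (of order $m$) if and only if all of the following hold: (i) $\mathcal{Q}\mathcal{P}=0$; (ii) the sequence $\mathbb{U}\xrightarrow{\mathcal{P}_m(y,\zeta)}\mathbb{V}\xrightarrow{\mathcal{Q}_m(y,\zeta)}\mathbb{W}$ is exact (at $\mathbb{V}$) for some $y\in\mathbb{R}^n$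 and some $\zeta\in\mathbb{R}^n\setminus\{0\}$; (iii) for each multi-index $\gamma$ with $|\gamma|=2m$ and each $x$, $\sum_{\alpha+\beta=\gamma,\ |\alpha|=|\beta|=m} B_\beta(x)A_\alpha(x)=0$ as operators from $\mathbb{U}$ to $\mathbb{W}$; (iv) the matrix $\mathcal{P}_m(x,\xi)$ has constant rank for all $x\in\mathbb{R}^n$ and all $\xi\neq 0$; (v) the matrix $\mathcal{Q}_m(x,\xi)$ has constant rank for all $x\in\mathbb{R}^n$ and all $\xi\neq 0$.
   Context: $\mathcal{D}'(\mathbb{R}^n,\mathbb{U})$ denotes $\mathbb{U}$-valued distributions on $\mathbb{R}^n$; $D^\alpha$ is the partial derivative of multi-index $\alpha$ and $\xi^\alpha=\prod_i\xi_i^{\alpha_i}$. Definition: the sequence $\mathcal{D}'(\mathbb{R}^n,\mathbb{U})\xrightarrow{\mathcal{P}}\mathcal{D}'(\mathbb{R}^n,\mathbb{V})\xrightarrow{\mathcal{Q}}\mathcal{D}'(\mathbb{R}^n,\mathbb{W})$ of order-$m$ operators is an elliptic complex of order $m$ if $\mathcal{Q}\mathcal{P}=0$ and the symbol complex $\mathbb{U}\xrightarrow{\mathcal{P}_m(x,\xi)}\mathbb{V}\xrightarrow{\mathcal{Q}_m(x,\xi)}\mathbb{W}$ is exact at $\mathbb{V}$ (i.e. $\operatorname{im}\mathcal{P}_m(x,\xi)=\ker\mathcal{Q}_m(x,\xi)$) for every $x\in\mathbb{R}^n$ and every $\xi\in\mathbb{R}^n\setminus\{0\}$. *)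

theory Defs
  imports "HOL-Analysis.Analysis"
begin

(* Multi-indices on R^n = real^'n are functions 'n => nat. *)
definition mlen :: "('n::finite \<Rightarrow> nat) \<Rightarrow> nat" where
  "mlen \<alpha> = (\<Sum>i\<in>UNIV. \<alpha> i)"

definition mpow :: "real^'n::finite \<Rightarrow> ('n \<Rightarrow> nat) \<Rightarrow> real" where
  "mpow \<xi> \<alpha> = (\<Prod>i\<in>UNIV. (\<xi> $ i) ^ \<alpha> i)"

definition pd :: "'n::finite \<Rightarrow> (real^'n \<Rightarrow> 'a::real_normed_vector) \<Rightarrow> (real^'n \<Rightarrow> 'a)" where
  "pd i f = (\<lambda>x. frechet_derivative f (at x) (axis i 1))"

definition mi_list :: "('n::finite \<Rightarrow> nat) \<Rightarrow> 'n list" where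
  "mi_list \<alpha> = (SOME l. \<forall>i. count_list l i = \<alpha> i)"

(* D^\<alpha> (on C^\<infinity> functions the order of differentiation is irrelevant) *)
definition Dmi :: "('n::finite \<Rightarrow> nat) \<Rightarrow> (real^'n \<Rightarrow> 'a::real_normed_vector) \<Rightarrow> (real^'n \<Rightarrow> 'a)" where
  "Dmi \<alpha> f = foldr pd (mi_list \<alpha>) f"

fun Ck :: "nat \<Rightarrow> (real^'n::finite \<Rightarrow> 'a::real_normed_vector) \<Rightarrow> bool" where
  "Ck 0 f = continuous_on UNIV f"
| "Ck (Suc k) f = (continuous_on UNIV f \<and> (\<forall>x. f differentiable (at x)) \<and> (\<forall>i. Ck k (pd i f)))"

definition smooth_fun :: "(real^'n::finite \<Rightarrow> 'a::real_normed_vector) \<Rightarrow> bool" where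
  "smooth_fun f = (\<forall>k. Ck k f)"

definition diff_op :: "(('n::finite \<Rightarrow> nat) \<Rightarrow> real^'n \<Rightarrow> 'u::real_normed_vector \<Rightarrow>\<^sub>L 'v::real_normed_vector)
    \<Rightarrow> nat \<Rightarrow> (real^'n \<Rightarrow> 'u) \<Rightarrow> (real^'n \<Rightarrow> 'v)" where
  "diff_op A m u = (\<lambda>x. \<Sum>\<alpha>\<in>{\<alpha>. mlen \<alpha> \<le> m}. blinfun_apply (A \<alpha> x) (Dmi \<alpha> u x))"

definition principal_symbol :: "(('n::finite \<Rightarrow> nat) \<Rightarrow> real^'n \<Rightarrow> 'u::real_normed_vector \<Rightarrow>\<^sub>L 'v::real_normed_vector)
    \<Rightarrow> nat \<Rightarrow> real^'n \<Rightarrow> real^'n \<Rightarrow> 'u \<Rightarrow>\<^sub>L 'v" where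
  "principal_symbol A m x \<xi> = (\<Sum>\<alpha>\<in>{\<alpha>. mlen \<alpha> = m}. mpow \<xi> \<alpha> *\<^sub>R A \<alpha> x)"

(* QP = 0, read classically: Q(Pu) = 0 whenever u is C^\<infinity> and Pu is C^m
   (so that Q(Pu) is classically defined). *)
definition comp_zero ::
  "(('n::finite \<Rightarrow> nat) \<Rightarrow> real^'n \<Rightarrow> 'u::real_normed_vector \<Rightarrow>\<^sub>L 'v::real_normed_vector)
   \<Rightarrow> (('n \<Rightarrow> nat) \<Rightarrow> real^'n \<Rightarrow> 'v \<Rightarrow>\<^sub>L 'w::real_normed_vector) \<Rightarrow> nat \<Rightarrow> bool" where
  "comp_zero A B m = (\<forall>u. smooth_fun u \<and> Ck m (diff_op A m u) \<longrightarrow> diff_op B m (diff_op A m u) = (\<lambda>x. 0))"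

definition exact_at_mid :: "('u::real_normed_vector \<Rightarrow>\<^sub>L 'v::real_normed_vector) \<Rightarrow> ('v \<Rightarrow>\<^sub>L 'w::real_normed_vector) \<Rightarrow> bool" where
  "exact_at_mid f g = (range (blinfun_apply f) = {v. blinfun_apply g v = 0})"

definition lrank :: "('u::euclidean_space \<Rightarrow>\<^sub>L 'v::euclidean_space) \<Rightarrow> nat" where
  "lrank f = dim (range (blinfun_apply f))"

definition elliptic_complex ::
  "(('n::finite \<Rightarrow> nat) \<Rightarrow> real^'n \<Rightarrow> 'u::euclidean_space \<Rightarrow>\<^sub>L 'v::euclidean_space)
   \<Rightarrow> (('n \<Rightarrow> nat) \<Rightarrow> real^'n \<Rightarrow> 'v \<Rightarrow>\<^sub>L 'w::euclidean_space) \<Rightarrow> nat \<Rightarrow> bool" where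
  "elliptic_complex A B m = (comp_zero A B m \<and>
     (\<forall>x \<xi>. \<xi> \<noteq> 0 \<longrightarrow> exact_at_mid (principal_symbol A m x \<xi>) (principal_symbol B m x \<xi>)))"

end

theory Submission
  imports Defs "HOL-Computational_Algebra.Primes"
begin

text \<open>
  Since \<open>\<Q>\<P> = 0\<close>, the symbol sequence is a complex at every point, and a complex
  \<open>U \<rightarrow> V \<rightarrow> W\<close> is exact iff the two ranks add up to \<open>dim V\<close>. Condition (iii) says precisely
  that \<open>\<Q>\<^sub>m(x,\<xi>) \<P>\<^sub>m(x,\<xi>)\<close>, a polynomial in \<open>\<xi>\<close> homogeneous of degree \<open>2m\<close>, vanishes identically.
  Rank is lower semicontinuous, so along any connected set of points \<open>(x,\<xi>)\<close>, \<open>\<xi> \<noteq> 0\<close>,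
  on which the two ranks have constant sum, each rank is locally, hence globally, constant.
  Any two such points can be joined by a segment avoiding \<open>\<xi> = 0\<close> after possibly replacing \<open>\<xi>\<close>
  by \<open>-\<xi>\<close>, which does not change the ranks by homogeneity. Conversely, constant ranks
  turn exactness at one point into exactness everywhere.
\<close>

section \<open>Multi-indices\<close>

lemma finite_mlen_le: "finite {\<alpha>::'n::finite \<Rightarrow> nat. mlen \<alpha> \<le> m}"
proof (rule finite_subset)
  show "{\<alpha>::'n \<Rightarrow> nat. mlen \<alpha> \<le> m} \<subseteq> PiE UNIV (\<lambda>_. {..m})"
  proof
    fix \<alpha> :: "'n \<Rightarrow> nat" assume "\<alpha> \<in> {\<alpha>. mlen \<alpha> \<le> m}"
    then have "\<alpha> i \<le> m" for i
      unfolding mlen_def using member_le_sum[of i UNIV \<alpha>] by simp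
    then show "\<alpha> \<in> PiE UNIV (\<lambda>_. {..m})" by auto
  qed
qed (simp add: finite_PiE)

lemma finite_mlen_eq: "finite {\<alpha>::'n::finite \<Rightarrow> nat. mlen \<alpha> = m}"
  by (rule finite_subset[OF _ finite_mlen_le[of m]]) auto

lemma mlen_add: "mlen (\<lambda>i. \<alpha> i + \<beta> i) = mlen \<alpha> + mlen \<beta>"
  unfolding mlen_def by (simp add: sum.distrib)

lemma mpow_add: "mpow \<xi> (\<lambda>i. \<alpha> i + \<beta> i) = mpow \<xi> \<alpha> * mpow \<xi> \<beta>"
  unfolding mpow_def by (simp add: power_add prod.distrib)

lemma mpow_scaleR: "mpow (c *\<^sub>R \<xi>) \<alpha> = c ^ mlen \<alpha> * mpow \<xi> \<alpha>"
  unfolding mpow_def mlen_def by (simp add: power_mult_distrib prod.distrib power_sum)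

section \<open>Ranks of linear maps\<close>

lemma linear_blinfun_apply [simp]: "linear (blinfun_apply f)"
  by (simp add: blinfun.bounded_linear_right bounded_linear.linear)

lemma dim_image_eq_if_trivial_kernel:
  fixes f :: "'a::euclidean_space \<Rightarrow> 'b::euclidean_space"
  assumes "linear f" "subspace E" "\<forall>x\<in>E. f x = 0 \<longrightarrow> x = 0"
  shows "dim (f ` E) = dim E"
proof (rule dim_image_eq[OF \<open>linear f\<close>])
  show "inj_on f (span E)"
    unfolding span_eq_iff[THEN iffD2, OF assms(2)]
    using linear_injective_on_subspace_0[OF assms(1,2)] assms(3) by simp
qed

lemma linear_image_orthogonal_kernel:
  fixes f :: "'a::euclidean_space \<Rightarrow> 'b::euclidean_space"
  assumes "linear f"
  shows "f ` {y. \<forall>x. f x = 0 \<longrightarrow> orthogonal x y} = range f"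
proof
  let ?K = "{x. f x = 0}"
  have span_K: "span ?K = ?K"
    by (rule span_eq_iff[THEN iffD2, OF linear_subspace_kernel[OF assms]])
  show "range f \<subseteq> f ` {y. \<forall>x. f x = 0 \<longrightarrow> orthogonal x y}"
  proof
    fix w assume "w \<in> range f"
    then obtain v where v: "w = f v" by auto
    obtain y z where "v = y + z" "y \<in> ?K" and orth: "\<And>x. x \<in> ?K \<Longrightarrow> orthogonal z x"
      using orthogonal_subspace_decomp_exists[of ?K v] unfolding span_K by metis
    then have "w = f z" using v linear_add[OF assms] by simp
    moreover have "\<forall>x. f x = 0 \<longrightarrow> orthogonal x z"
      using orth by (simp add: orthogonal_commute)
    ultimately show "w \<in> f ` {y. \<forall>x. f x = 0 \<longrightarrow> orthogonal x y}" by auto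
  qed
qed auto

lemma dim_range_eq_dim_orthogonal_kernel:
  fixes f :: "'a::euclidean_space \<Rightarrow> 'b::euclidean_space"
  assumes "linear f"
  shows "dim (range f) = dim {y. \<forall>x. f x = 0 \<longrightarrow> orthogonal x y}"
proof -
  have "subspace {y. \<forall>x. f x = 0 \<longrightarrow> orthogonal x y}"
    using subspace_orthogonal_to_vectors[of "{x. f x = 0}"] by simp
  moreover have "\<forall>y\<in>{y. \<forall>x. f x = 0 \<longrightarrow> orthogonal x y}. f y = 0 \<longrightarrow> y = 0"
    by (auto simp: orthogonal_def)
  ultimately have "dim (f ` {y. \<forall>x. f x = 0 \<longrightarrow> orthogonal x y}) = dim {y. \<forall>x. f x = 0 \<longrightarrow> orthogonal x y}"
    by (rule dim_image_eq_if_trivial_kernel[OF assms])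
  then show ?thesis by (simp only: linear_image_orthogonal_kernel[OF assms])
qed

lemma rank_nullity:
  fixes f :: "'a::euclidean_space \<Rightarrow> 'b::euclidean_space"
  assumes "linear f"
  shows "dim (range f) + dim {x. f x = 0} = DIM('a)"
  using dim_subspace_orthogonal_to_vectors[of "{x. f x = 0}" UNIV]
    linear_subspace_kernel[OF assms] dim_range_eq_dim_orthogonal_kernel[OF assms]
  by simp

lemma lrank_scaleR:
  fixes f :: "'a::euclidean_space \<Rightarrow>\<^sub>L 'b::euclidean_space"
  assumes "c \<noteq> 0"
  shows "lrank (c *\<^sub>R f) = lrank f"
proof -
  have "blinfun_apply (c *\<^sub>R f) = blinfun_apply f \<circ> (\<lambda>x. c *\<^sub>R x)"
    by (simp add: fun_eq_iff blinfun.scaleR_left blinfun.scaleR_right)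
  then have "range (blinfun_apply (c *\<^sub>R f)) = blinfun_apply f ` range (\<lambda>x. c *\<^sub>R x)"
    by (simp only: image_comp)
  also have "range (\<lambda>x::'a. c *\<^sub>R x) = UNIV"
    using assms by (intro surjI[of _ "\<lambda>y. inverse c *\<^sub>R y"]) simp
  finally show ?thesis unfolding lrank_def by simp
qed

text \<open>On the orthogonal complement of \<open>ker f\<close>, \<open>f\<close> is bounded below by some \<open>e > 0\<close>;
  every \<open>g\<close> with \<open>\<parallel>g - f\<parallel> < e\<close> stays injective there.\<close>

lemma lrank_lower_semicontinuous:
  fixes f :: "'a::euclidean_space \<Rightarrow>\<^sub>L 'b::euclidean_space"
  shows "\<exists>U. open U \<and> f \<in> U \<and> (\<forall>g\<in>U. lrank f \<le> lrank g)"
proof -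
  define E where "E = {y. \<forall>x. f x = 0 \<longrightarrow> orthogonal x y}"
  have sE: "subspace E"
    using subspace_orthogonal_to_vectors[of "{x. f x = 0}"] unfolding E_def by simp
  have "\<forall>x\<in>E. f x = 0 \<longrightarrow> x = 0"
    unfolding E_def by (auto simp: orthogonal_def)
  then obtain e where "e > 0" and e: "\<forall>x\<in>E. e * norm x \<le> norm (f x)"
    using injective_imp_isometric[OF closed_subspace[OF sE] sE blinfun.bounded_linear_right] by blast
  have "lrank f \<le> lrank g" if "g \<in> ball f e" for g
  proof -
    have "x = 0" if "x \<in> E" "g x = 0" for x
    proof (rule ccontr)
      assume "x \<noteq> 0"
      have "norm (f x) = norm ((g - f) x)"
        using that by (simp add: blinfun.diff_left)
      also have "\<dots> \<le> norm (g - f) * norm x" by (rule norm_blinfun)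
      also have "\<dots> < e * norm x"
        using \<open>g \<in> ball f e\<close> \<open>x \<noteq> 0\<close> by (simp add: dist_norm norm_minus_commute)
      finally show False using e that by force
    qed
    then have "dim (g ` E) = dim E"
      by (rule dim_image_eq_if_trivial_kernel[OF linear_blinfun_apply sE, rule_format])
    also have "\<dots> = lrank f"
      unfolding lrank_def E_def by (simp add: dim_range_eq_dim_orthogonal_kernel)
    finally show ?thesis
      unfolding lrank_def using dim_subset[of "g ` E" "range g"] by auto
  qed
  then show ?thesis using \<open>e > 0\<close> by (intro exI[of _ "ball f e"]) auto
qed

lemma exact_at_mid_imp_comp_eq_0:
  assumes "exact_at_mid f g"
  shows "g o\<^sub>L f = 0"
  using assms unfolding exact_at_mid_def by (intro blinfun_eqI) auto

lemma exact_at_mid_iff_lrank_add: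
  fixes f :: "'u::euclidean_space \<Rightarrow>\<^sub>L 'v::euclidean_space" and g :: "'v \<Rightarrow>\<^sub>L 'w::euclidean_space"
  assumes "g o\<^sub>L f = 0"
  shows "exact_at_mid f g \<longleftrightarrow> lrank f + lrank g = DIM('v)"
proof -
  let ?K = "{v. g v = 0}"
  have "g (f u) = 0" for u
    using arg_cong[OF assms, of "\<lambda>h. h u"] by simp
  then have sub: "range (blinfun_apply f) \<subseteq> ?K" by auto
  have "subspace (range (blinfun_apply f))"
    by (rule linear_subspace_image[OF linear_blinfun_apply subspace_UNIV])
  moreover have "subspace ?K"
    by (rule linear_subspace_kernel[OF linear_blinfun_apply])
  ultimately have "range (blinfun_apply f) = ?K \<longleftrightarrow> dim ?K \<le> lrank f"
    using subspace_dim_equal[OF _ _ sub] unfolding lrank_def by (metis order_refl)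
  also have "\<dots> \<longleftrightarrow> lrank f + lrank g = DIM('v)"
  proof -
    have "lrank f \<le> dim ?K"
      using dim_subset[OF sub] unfolding lrank_def .
    moreover have "lrank g + dim ?K = DIM('v)"
      using rank_nullity[OF linear_blinfun_apply] unfolding lrank_def .
    ultimately show ?thesis by (intro iffI) linarith+
  qed
  finally show ?thesis unfolding exact_at_mid_def .
qed

lemma lrank_constant_on_connected:
  fixes F :: "'a::topological_space \<Rightarrow> 'u::euclidean_space \<Rightarrow>\<^sub>L 'v::euclidean_space"
    and G :: "'a \<Rightarrow> 'c::euclidean_space \<Rightarrow>\<^sub>L 'w::euclidean_space"
  assumes "connected S" "continuous_on S F" "continuous_on S G"
    and rank_sum: "\<And>t. t \<in> S \<Longrightarrow> lrank (F t) + lrank (G t) = N"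
  shows "(\<lambda>t. lrank (F t)) constant_on S"
proof (rule locally_constant_imp_constant[OF \<open>connected S\<close>])
  fix a assume "a \<in> S"
  obtain U1 where U1: "open U1" "F a \<in> U1" "\<forall>g\<in>U1. lrank (F a) \<le> lrank g"
    using lrank_lower_semicontinuous by blast
  obtain U2 where U2: "open U2" "G a \<in> U2" "\<forall>g\<in>U2. lrank (G a) \<le> lrank g"
    using lrank_lower_semicontinuous by blast
  define T where "T = (S \<inter> F -` U1) \<inter> (S \<inter> G -` U2)"
  have "openin (top_of_set S) T"
    unfolding T_def using continuous_openin_preimage_gen[OF assms(2) U1(1)]
      continuous_openin_preimage_gen[OF assms(3) U2(1)] by (rule openin_Int)
  moreover have "lrank (F t) = lrank (F a)" if "t \<in> T" for t
  proof -
    have "lrank (F a) \<le> lrank (F t)" "lrank (G a) \<le> lrank (G t)"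
      using that U1(3) U2(3) unfolding T_def by auto
    moreover have "lrank (F t) + lrank (G t) = lrank (F a) + lrank (G a)"
      using that rank_sum \<open>a \<in> S\<close> unfolding T_def by auto
    ultimately show ?thesis by linarith
  qed
  ultimately show "\<exists>T. openin (top_of_set S) T \<and> a \<in> T \<and> (\<forall>t\<in>T. lrank (F t) = lrank (F a))"
    using \<open>a \<in> S\<close> U1(2) U2(2) unfolding T_def by blast
qed

section \<open>Vanishing of polynomial coefficients\<close>

lemma coefficients_eq_0_if_power_sums_eq_0:
  fixes c :: "'i \<Rightarrow> 'a::real_vector" and M :: "'i \<Rightarrow> real"
  assumes "finite G" "inj_on M G" "\<And>s::nat. (\<Sum>g\<in>G. M g ^ s *\<^sub>R c g) = 0"
  shows "\<forall>g\<in>G. c g = 0"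
  using assms
proof (induction G arbitrary: c rule: finite_induct)
  case (insert g0 F)
  have h: "M g0 ^ s *\<^sub>R c g0 + (\<Sum>g\<in>F. M g ^ s *\<^sub>R c g) = 0" for s
    using insert.prems(2) insert.hyps by (simp add: sum.insert)
  \<comment> \<open>multiplying the \<open>s\<close>-th equation by \<open>M g0\<close> and subtracting the \<open>s+1\<close>-st kills \<open>c g0\<close>\<close>
  have "(\<Sum>g\<in>F. M g ^ s *\<^sub>R ((M g - M g0) *\<^sub>R c g)) = 0" for s
  proof -
    have tail: "(\<Sum>g\<in>F. M g ^ k *\<^sub>R c g) = - (M g0 ^ k *\<^sub>R c g0)" for k
      using h[of k] by (simp add: eq_neg_iff_add_eq_0 add.commute)
    have "(\<Sum>g\<in>F. M g ^ s *\<^sub>R ((M g - M g0) *\<^sub>R c g))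
        = (\<Sum>g\<in>F. M g ^ Suc s *\<^sub>R c g) - M g0 *\<^sub>R (\<Sum>g\<in>F. M g ^ s *\<^sub>R c g)"
      by (simp add: scaleR_sum_right sum_subtractf[symmetric] algebra_simps)
    also have "\<dots> = 0"
      by (simp only: tail) simp
    finally show ?thesis .
  qed
  moreover have "M g \<noteq> M g0" if "g \<in> F" for g
    using insert.prems(1) insert.hyps that by (auto simp: inj_on_def)
  ultimately have "\<forall>g\<in>F. c g = 0"
    using insert.IH[of "\<lambda>g. (M g - M g0) *\<^sub>R c g"] insert.prems(1) by (simp add: inj_on_insert)
  with h[of 0] show ?case by simp
qed simp

lemma exists_inj_prime_valued: "\<exists>p::'n::finite \<Rightarrow> nat. inj p \<and> (\<forall>i. prime (p i))"
proof -
  let ?P = "{q::nat. prime q}"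
  obtain k :: "'n \<Rightarrow> nat" where "inj k"
    using finite_imp_inj_to_nat_seg[of "UNIV::'n set"] by auto
  have inf: "infinite ?P" using primes_infinite by simp
  have "inj (enumerate ?P)"
    using strict_mono_enumerate[OF inf] strict_mono_imp_inj_on by blast
  then have "inj (enumerate ?P \<circ> k)" using \<open>inj k\<close> by (simp add: inj_compose)
  moreover have "\<forall>i. prime ((enumerate ?P \<circ> k) i)" using enumerate_in_set[OF inf] by simp
  ultimately show ?thesis by blast
qed

lemma inj_prod_prime_powers:
  fixes p :: "'n::finite \<Rightarrow> nat"
  assumes "inj p" "\<forall>i. prime (p i)"
  shows "inj (\<lambda>\<gamma>::'n \<Rightarrow> nat. \<Prod>i\<in>UNIV. p i ^ \<gamma> i)"
proof (rule injI)
  have multiplicity: "multiplicity (p j) (\<Prod>i\<in>UNIV. p i ^ \<gamma> i) = \<gamma> j" for \<gamma> :: "'n \<Rightarrow> nat" and j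
  proof -
    have "(\<Prod>q\<in>range p. q ^ \<gamma> (inv p q)) = (\<Prod>i\<in>UNIV. p i ^ \<gamma> (inv p (p i)))"
      using prod.reindex[of p UNIV "\<lambda>q. q ^ \<gamma> (inv p q)"] assms(1) by simp
    also have "\<dots> = (\<Prod>i\<in>UNIV. p i ^ \<gamma> i)" using assms(1) by simp
    finally have "(\<Prod>i\<in>UNIV. p i ^ \<gamma> i) = (\<Prod>q\<in>range p. q ^ \<gamma> (inv p q))" ..
    then show ?thesis
      using multiplicity_prod_prime_powers[of "range p" "p j" "\<lambda>q. \<gamma> (inv p q)"] assms by auto
  qed
  fix \<gamma> \<delta> :: "'n \<Rightarrow> nat"
  assume "(\<Prod>i\<in>UNIV. p i ^ \<gamma> i) = (\<Prod>i\<in>UNIV. p i ^ \<delta> i)"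
  then have "\<gamma> j = \<delta> j" for j using multiplicity[of j \<gamma>] multiplicity[of j \<delta>] by simp
  then show "\<gamma> = \<delta>" by auto
qed

text \<open>Evaluating at \<open>\<xi> = (p\<^sub>1\<^sup>s, \<dots>, p\<^sub>n\<^sup>s)\<close> for distinct primes \<open>p\<^sub>i\<close> turns the monomials
  into powers \<open>M\<^sub>\<gamma>\<^sup>s\<close> of pairwise distinct numbers \<open>M\<^sub>\<gamma> = \<Prod> p\<^sub>i\<^sup>\<gamma>\<^sup>\<^sub>i\<close>.\<close>

lemma monomial_coefficients_eq_0:
  fixes C :: "('n::finite \<Rightarrow> nat) \<Rightarrow> 'a::real_vector"
  assumes "finite T"
    and vanish: "\<And>\<xi>::real^'n. (\<forall>i. \<xi> $ i > 0) \<Longrightarrow> (\<Sum>\<gamma>\<in>T. mpow \<xi> \<gamma> *\<^sub>R C \<gamma>) = 0"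
  shows "\<forall>\<gamma>\<in>T. C \<gamma> = 0"
proof -
  obtain p :: "'n \<Rightarrow> nat" where p: "inj p" "\<forall>i. prime (p i)"
    using exists_inj_prime_valued by blast
  define M where "M \<gamma> = real (\<Prod>i\<in>UNIV. p i ^ \<gamma> i)" for \<gamma> :: "'n \<Rightarrow> nat"
  have "inj M"
    using inj_prod_prime_powers[OF p] unfolding M_def inj_def by (metis of_nat_eq_iff)
  moreover have "(\<Sum>\<gamma>\<in>T. M \<gamma> ^ s *\<^sub>R C \<gamma>) = 0" for s
  proof -
    define \<xi> where "\<xi> = (\<chi> i. real (p i) ^ s :: real^'n)"
    have "mpow \<xi> \<gamma> = M \<gamma> ^ s" for \<gamma>
    proof -
      have "mpow \<xi> \<gamma> = (\<Prod>i\<in>UNIV. (real (p i) ^ \<gamma> i) ^ s)"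
        unfolding mpow_def \<xi>_def by (simp add: power_mult[symmetric] mult.commute)
      also have "\<dots> = M \<gamma> ^ s"
        unfolding M_def by (simp add: prod_power_distrib)
      finally show ?thesis .
    qed
    moreover have "\<forall>i. \<xi> $ i > 0"
      unfolding \<xi>_def using p(2) prime_gt_0_nat by simp
    ultimately show ?thesis using vanish[of \<xi>] by simp
  qed
  ultimately show ?thesis
    using coefficients_eq_0_if_power_sums_eq_0[OF assms(1) inj_on_subset[OF _ subset_UNIV]] by blast
qed

section \<open>Principal symbols\<close>

definition principal_comp_coeff ::
  "(('n::finite \<Rightarrow> nat) \<Rightarrow> real^'n \<Rightarrow> 'u::real_normed_vector \<Rightarrow>\<^sub>L 'v::real_normed_vector)
   \<Rightarrow> (('n \<Rightarrow> nat) \<Rightarrow> real^'n \<Rightarrow> 'v \<Rightarrow>\<^sub>L 'w::real_normed_vector)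
   \<Rightarrow> nat \<Rightarrow> real^'n \<Rightarrow> ('n \<Rightarrow> nat) \<Rightarrow> 'u \<Rightarrow>\<^sub>L 'w" where
  "principal_comp_coeff A B m x \<gamma> =
    (\<Sum>(\<alpha>, \<beta>)\<in>{(\<alpha>, \<beta>). (\<lambda>i. \<alpha> i + \<beta> i) = \<gamma> \<and> mlen \<alpha> = m \<and> mlen \<beta> = m}. B \<beta> x o\<^sub>L A \<alpha> x)"

lemma principal_symbol_comp:
  fixes A :: "('n::finite \<Rightarrow> nat) \<Rightarrow> real^'n \<Rightarrow> 'u::real_normed_vector \<Rightarrow>\<^sub>L 'v::real_normed_vector"
    and B :: "('n \<Rightarrow> nat) \<Rightarrow> real^'n \<Rightarrow> 'v \<Rightarrow>\<^sub>L 'w::real_normed_vector"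
  shows "principal_symbol B m x \<xi> o\<^sub>L principal_symbol A m x \<xi> =
    (\<Sum>\<gamma>\<in>{\<gamma>. mlen \<gamma> = 2 * m}. mpow \<xi> \<gamma> *\<^sub>R principal_comp_coeff A B m x \<gamma>)"
proof -
  let ?S = "{\<alpha>::'n \<Rightarrow> nat. mlen \<alpha> = m}"
  let ?h = "\<lambda>(\<alpha>, \<beta>). mpow \<xi> (\<lambda>i. \<alpha> i + \<beta> i) *\<^sub>R (B \<beta> x o\<^sub>L A \<alpha> x)"
  note comp = bounded_bilinear_blinfun_compose
  have "principal_symbol B m x \<xi> o\<^sub>L principal_symbol A m x \<xi> = sum ?h (?S \<times> ?S)"
    unfolding principal_symbol_def
    by (simp add: bounded_bilinear.sum_left[OF comp] bounded_bilinear.sum_right[OF comp]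
        bounded_bilinear.scaleR_left[OF comp] bounded_bilinear.scaleR_right[OF comp]
        scaleR_sum_right mpow_add sum.cartesian_product)
  also have "\<dots> = (\<Sum>\<gamma>\<in>{\<gamma>. mlen \<gamma> = 2 * m}. sum ?h {p \<in> ?S \<times> ?S. (case p of (\<alpha>, \<beta>) \<Rightarrow> \<lambda>i. \<alpha> i + \<beta> i) = \<gamma>})"
    by (rule sum.group[symmetric]) (auto simp: finite_mlen_eq mlen_add)
  also have "\<dots> = (\<Sum>\<gamma>\<in>{\<gamma>. mlen \<gamma> = 2 * m}. mpow \<xi> \<gamma> *\<^sub>R principal_comp_coeff A B m x \<gamma>)"
    unfolding principal_comp_coeff_def scaleR_sum_right
    by (intro sum.cong refl) (auto intro: sum.cong)
  finally show ?thesis .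
qed

lemma principal_symbol_comp_eq_0_iff:
  fixes A :: "('n::finite \<Rightarrow> nat) \<Rightarrow> real^'n \<Rightarrow> 'u::real_normed_vector \<Rightarrow>\<^sub>L 'v::real_normed_vector"
    and B :: "('n \<Rightarrow> nat) \<Rightarrow> real^'n \<Rightarrow> 'v \<Rightarrow>\<^sub>L 'w::real_normed_vector"
  shows "(\<forall>\<gamma>. mlen \<gamma> = 2 * m \<longrightarrow> principal_comp_coeff A B m x \<gamma> = 0) \<longleftrightarrow>
   (\<forall>\<xi>. \<xi> \<noteq> 0 \<longrightarrow> principal_symbol B m x \<xi> o\<^sub>L principal_symbol A m x \<xi> = 0)"
proof
  assume comp: "\<forall>\<xi>. \<xi> \<noteq> 0 \<longrightarrow> principal_symbol B m x \<xi> o\<^sub>L principal_symbol A m x \<xi> = 0"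
  have "(\<Sum>\<gamma>\<in>{\<gamma>. mlen \<gamma> = 2 * m}. mpow \<xi> \<gamma> *\<^sub>R principal_comp_coeff A B m x \<gamma>) = 0"
    if pos: "\<forall>i. \<xi> $ i > 0" for \<xi> :: "real^'n"
  proof -
    have "\<xi> \<noteq> 0"
    proof
      assume "\<xi> = 0"
      with pos show False by simp
    qed
    with comp show ?thesis unfolding principal_symbol_comp by blast
  qed
  then show "\<forall>\<gamma>. mlen \<gamma> = 2 * m \<longrightarrow> principal_comp_coeff A B m x \<gamma> = 0"
    using monomial_coefficients_eq_0[OF finite_mlen_eq, where C = "principal_comp_coeff A B m x"]
    by blast
next
  assume "\<forall>\<gamma>. mlen \<gamma> = 2 * m \<longrightarrow> principal_comp_coeff A B m x \<gamma> = 0"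
  then show "\<forall>\<xi>. \<xi> \<noteq> 0 \<longrightarrow> principal_symbol B m x \<xi> o\<^sub>L principal_symbol A m x \<xi> = 0"
    unfolding principal_symbol_comp by (intro allI impI sum.neutral) auto
qed

lemma principal_symbol_scaleR:
  "principal_symbol A m x (c *\<^sub>R \<xi>) = c ^ m *\<^sub>R principal_symbol A m x \<xi>"
  unfolding principal_symbol_def by (simp add: mpow_scaleR scaleR_sum_right)

lemma lrank_principal_symbol_uminus:
  "lrank (principal_symbol A m x (- \<xi>)) = lrank (principal_symbol A m x \<xi>)"
  using principal_symbol_scaleR[of A m x "-1" \<xi>] lrank_scaleR[of "(-1) ^ m"] by simp

lemma continuous_on_principal_symbol:
  fixes A :: "('n::finite \<Rightarrow> nat) \<Rightarrow> real^'n \<Rightarrow> 'u::real_normed_vector \<Rightarrow>\<^sub>L 'v::real_normed_vector"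
  assumes "\<And>\<alpha>. mlen \<alpha> = m \<Longrightarrow> continuous_on UNIV (A \<alpha>)"
  shows "continuous_on S (\<lambda>p. principal_symbol A m (fst p) (snd p))"
  unfolding principal_symbol_def
proof (intro continuous_on_sum continuous_on_scaleR)
  fix \<alpha> :: "'n \<Rightarrow> nat" assume "\<alpha> \<in> {\<alpha>. mlen \<alpha> = m}"
  then show "continuous_on S (\<lambda>p. A \<alpha> (fst p))"
    using assms by (intro continuous_on_compose2[of UNIV "A \<alpha>" S fst] continuous_on_fst continuous_on_id) auto
  show "continuous_on S (\<lambda>p. mpow (snd p) \<alpha>)"
    unfolding mpow_def by (intro continuous_intros)
qed

lemma zero_notin_closed_segment_or_uminus:
  fixes a b :: "'a::real_vector"
  assumes "a \<noteq> 0" "b \<noteq> 0"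
  shows "0 \<notin> closed_segment a b \<or> 0 \<notin> closed_segment a (- b)"
proof (rule ccontr)
  assume "\<not> ?thesis"
  then obtain s t where "0 \<le> s" "s \<le> 1" "0 \<le> t" "t \<le> 1"
    and s: "0 = (1 - s) *\<^sub>R a + s *\<^sub>R b" and t: "0 = (1 - t) *\<^sub>R a + t *\<^sub>R (- b)"
    unfolding in_segment by blast
  have "s \<noteq> 0" "t \<noteq> 0" using s t \<open>a \<noteq> 0\<close> by auto
  \<comment> \<open>\<open>t\<close> times the first relation plus \<open>s\<close> times the second eliminates \<open>b\<close>\<close>
  have "(t * (1 - s) + s * (1 - t)) *\<^sub>R a = t *\<^sub>R ((1 - s) *\<^sub>R a + s *\<^sub>R b) + s *\<^sub>R ((1 - t) *\<^sub>R a + t *\<^sub>R (- b))"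
    by (simp add: algebra_simps flip: scaleR_add_left)
  then have "t * (1 - s) + s * (1 - t) = 0" using s t \<open>a \<noteq> 0\<close> by simp
  moreover have "t * (1 - s) \<ge> 0" "s * (1 - t) \<ge> 0"
    using \<open>0 \<le> s\<close> \<open>s \<le> 1\<close> \<open>0 \<le> t\<close> \<open>t \<le> 1\<close> by simp_all
  ultimately have "t * (1 - s) = 0" by linarith
  then have "s = 1" using \<open>t \<noteq> 0\<close> by simp
  then show False using s \<open>b \<noteq> 0\<close> by simp
qed

lemma lrank_principal_symbol_constant:
  fixes A :: "('n::finite \<Rightarrow> nat) \<Rightarrow> real^'n \<Rightarrow> 'u::euclidean_space \<Rightarrow>\<^sub>L 'v::euclidean_space"
    and B :: "('n \<Rightarrow> nat) \<Rightarrow> real^'n \<Rightarrow> 'c::euclidean_space \<Rightarrow>\<^sub>L 'w::euclidean_space"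
  assumes "\<And>\<alpha>. mlen \<alpha> = m \<Longrightarrow> continuous_on UNIV (A \<alpha>)"
    and "\<And>\<beta>. mlen \<beta> = m \<Longrightarrow> continuous_on UNIV (B \<beta>)"
    and rank_sum: "\<And>x \<xi>. \<xi> \<noteq> 0 \<Longrightarrow> lrank (principal_symbol A m x \<xi>) + lrank (principal_symbol B m x \<xi>) = N"
    and "\<xi> \<noteq> 0" "\<zeta> \<noteq> 0"
  shows "lrank (principal_symbol A m x \<xi>) = lrank (principal_symbol A m y \<zeta>)"
proof -
  obtain \<xi>' where \<xi>': "\<xi>' = \<xi> \<or> \<xi>' = - \<xi>" "0 \<notin> closed_segment \<zeta> \<xi>'"
    using zero_notin_closed_segment_or_uminus[OF \<open>\<zeta> \<noteq> 0\<close> \<open>\<xi> \<noteq> 0\<close>] by blast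
  let ?S = "closed_segment (y, \<zeta>) (x, \<xi>')"
  have "(\<lambda>p. lrank (principal_symbol A m (fst p) (snd p))) constant_on ?S"
  proof (rule lrank_constant_on_connected)
    show "lrank (principal_symbol A m (fst p) (snd p)) + lrank (principal_symbol B m (fst p) (snd p)) = N"
      if "p \<in> ?S" for p
      using that \<xi>'(2) rank_sum by (metis closed_segment_PairD prod.collapse)
  qed (use assms(1,2) in \<open>auto intro: continuous_on_principal_symbol\<close>)
  then obtain r where r: "\<forall>p\<in>?S. lrank (principal_symbol A m (fst p) (snd p)) = r"
    unfolding constant_on_def by blast
  have "lrank (principal_symbol A m x \<xi>) = lrank (principal_symbol A m x \<xi>')"
    using \<xi>'(1) by (auto simp: lrank_principal_symbol_uminus)
  also have "\<dots> = lrank (principal_symbol A m y \<zeta>)"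
    using r[rule_format, of "(x, \<xi>')"] r[rule_format, of "(y, \<zeta>)"] by simp
  finally show ?thesis .
qed

lemma principal_symbols_exact_everywhere_iff:
  fixes A :: "('n::finite \<Rightarrow> nat) \<Rightarrow> real^'n \<Rightarrow> 'u::euclidean_space \<Rightarrow>\<^sub>L 'v::euclidean_space"
    and B :: "('n \<Rightarrow> nat) \<Rightarrow> real^'n \<Rightarrow> 'v \<Rightarrow>\<^sub>L 'w::euclidean_space"
  assumes contA: "\<And>\<alpha>. mlen \<alpha> = m \<Longrightarrow> continuous_on UNIV (A \<alpha>)"
    and contB: "\<And>\<beta>. mlen \<beta> = m \<Longrightarrow> continuous_on UNIV (B \<beta>)"
  shows "(\<forall>x \<xi>. \<xi> \<noteq> 0 \<longrightarrow> exact_at_mid (principal_symbol A m x \<xi>) (principal_symbol B m x \<xi>)) \<longleftrightarrow>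
    (\<exists>y \<zeta>. \<zeta> \<noteq> 0 \<and> exact_at_mid (principal_symbol A m y \<zeta>) (principal_symbol B m y \<zeta>)) \<and>
    (\<forall>x \<xi>. \<xi> \<noteq> 0 \<longrightarrow> principal_symbol B m x \<xi> o\<^sub>L principal_symbol A m x \<xi> = 0) \<and>
    (\<exists>r. \<forall>x \<xi>. \<xi> \<noteq> 0 \<longrightarrow> lrank (principal_symbol A m x \<xi>) = r) \<and>
    (\<exists>r. \<forall>x \<xi>. \<xi> \<noteq> 0 \<longrightarrow> lrank (principal_symbol B m x \<xi>) = r)"
    (is "(\<forall>x \<xi>. _ \<longrightarrow> ?exact x \<xi>) \<longleftrightarrow> _ \<and> (\<forall>x \<xi>. _ \<longrightarrow> ?comp x \<xi> = 0) \<and> _")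
proof -
  have exact_iff: "?exact x \<xi> \<longleftrightarrow>
      lrank (principal_symbol A m x \<xi>) + lrank (principal_symbol B m x \<xi>) = DIM('v)"
    if "?comp x \<xi> = 0" for x \<xi>
    using exact_at_mid_iff_lrank_add[OF that] .
  show ?thesis
  proof (intro iffI conjI)
    assume exact: "\<forall>x \<xi>. \<xi> \<noteq> 0 \<longrightarrow> ?exact x \<xi>"
    show comp: "\<forall>x \<xi>. \<xi> \<noteq> 0 \<longrightarrow> ?comp x \<xi> = 0"
      using exact by (simp add: exact_at_mid_imp_comp_eq_0)
    have rank_sum: "\<And>x \<xi>. \<xi> \<noteq> 0 \<Longrightarrow>
        lrank (principal_symbol A m x \<xi>) + lrank (principal_symbol B m x \<xi>) = DIM('v)"
      using exact comp exact_iff by simp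
    then have rank_sum': "\<And>x \<xi>. \<xi> \<noteq> 0 \<Longrightarrow>
        lrank (principal_symbol B m x \<xi>) + lrank (principal_symbol A m x \<xi>) = DIM('v)"
      by (simp add: add.commute)
    obtain \<zeta> :: "real^'n" where "\<zeta> \<noteq> 0"
      using zero_neq_one[where 'a = "real^'n"] by blast
    then show "\<exists>y \<zeta>. \<zeta> \<noteq> 0 \<and> ?exact y \<zeta>" using exact by blast
    show "\<exists>r. \<forall>x \<xi>. \<xi> \<noteq> 0 \<longrightarrow> lrank (principal_symbol A m x \<xi>) = r"
      using lrank_principal_symbol_constant[where A = A and B = B, OF contA contB rank_sum _ \<open>\<zeta> \<noteq> 0\<close>]
      by blast
    show "\<exists>r. \<forall>x \<xi>. \<xi> \<noteq> 0 \<longrightarrow> lrank (principal_symbol B m x \<xi>) = r"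
      using lrank_principal_symbol_constant[where A = B and B = A, OF contB contA rank_sum' _ \<open>\<zeta> \<noteq> 0\<close>]
      by blast
  next
    assume "(\<exists>y \<zeta>. \<zeta> \<noteq> 0 \<and> ?exact y \<zeta>) \<and> (\<forall>x \<xi>. \<xi> \<noteq> 0 \<longrightarrow> ?comp x \<xi> = 0) \<and>
      (\<exists>r. \<forall>x \<xi>. \<xi> \<noteq> 0 \<longrightarrow> lrank (principal_symbol A m x \<xi>) = r) \<and>
      (\<exists>r. \<forall>x \<xi>. \<xi> \<noteq> 0 \<longrightarrow> lrank (principal_symbol B m x \<xi>) = r)"
    then obtain y \<zeta> r s where "\<zeta> \<noteq> 0" "?exact y \<zeta>"
      and comp: "\<forall>x \<xi>. \<xi> \<noteq> 0 \<longrightarrow> ?comp x \<xi> = 0"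
      and r: "\<forall>x \<xi>. \<xi> \<noteq> 0 \<longrightarrow> lrank (principal_symbol A m x \<xi>) = r"
      and s: "\<forall>x \<xi>. \<xi> \<noteq> 0 \<longrightarrow> lrank (principal_symbol B m x \<xi>) = s"
      by blast
    then have "r + s = DIM('v)"
      using exact_iff[of y \<zeta>] by simp
    then show "\<forall>x \<xi>. \<xi> \<noteq> 0 \<longrightarrow> ?exact x \<xi>"
      using comp r s exact_iff by simp
  qed
qed

theorem mainTheorem2:
  fixes A :: "('n::finite \<Rightarrow> nat) \<Rightarrow> real^'n \<Rightarrow> 'u::euclidean_space \<Rightarrow>\<^sub>L 'v::euclidean_space"
    and B :: "('n \<Rightarrow> nat) \<Rightarrow> real^'n \<Rightarrow> 'v \<Rightarrow>\<^sub>L 'w::euclidean_space"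
    and m :: nat
  assumes "m \<ge> 1"
    and "\<And>\<alpha>. mlen \<alpha> \<le> m \<Longrightarrow> continuous_on UNIV (A \<alpha>)"
    and "\<And>\<beta>. mlen \<beta> \<le> m \<Longrightarrow> continuous_on UNIV (B \<beta>)"
  shows "elliptic_complex A B m \<longleftrightarrow>
    (comp_zero A B m \<and>
     (\<exists>y \<zeta>. \<zeta> \<noteq> 0 \<and> exact_at_mid (principal_symbol A m y \<zeta>) (principal_symbol B m y \<zeta>)) \<and>
     (\<forall>\<gamma> x. mlen \<gamma> = 2 * m \<longrightarrow>
        (\<Sum>(\<alpha>, \<beta>)\<in>{(\<alpha>, \<beta>). (\<lambda>i. \<alpha> i + \<beta> i) = \<gamma> \<and> mlen \<alpha> = m \<and> mlen \<beta> = m}.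
            B \<beta> x o\<^sub>L A \<alpha> x) = 0) \<and>
     (\<exists>r. \<forall>x \<xi>. \<xi> \<noteq> 0 \<longrightarrow> lrank (principal_symbol A m x \<xi>) = r) \<and>
     (\<exists>r. \<forall>x \<xi>. \<xi> \<noteq> 0 \<longrightarrow> lrank (principal_symbol B m x \<xi>) = r))"
proof -
  have "\<And>\<alpha>. mlen \<alpha> = m \<Longrightarrow> continuous_on UNIV (A \<alpha>)"
    and "\<And>\<beta>. mlen \<beta> = m \<Longrightarrow> continuous_on UNIV (B \<beta>)"
    using assms(2,3) by simp_all
  note symbols = principal_symbols_exact_everywhere_iff[OF this]
  have coeffs: "(\<forall>\<gamma> x. mlen \<gamma> = 2 * m \<longrightarrow> principal_comp_coeff A B m x \<gamma> = 0) \<longleftrightarrow>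
    (\<forall>x \<xi>. \<xi> \<noteq> 0 \<longrightarrow> principal_symbol B m x \<xi> o\<^sub>L principal_symbol A m x \<xi> = 0)"
    by (subst all_comm) (simp only: principal_symbol_comp_eq_0_iff)
  show ?thesis
    by (simp only: elliptic_complex_def principal_comp_coeff_def[symmetric] coeffs symbols)
qed

end
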